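(* Let $(Y_{i\,j})_{i,j\in\mathbb N}$ be i.i.d. real random variables with $\mathbb E[Y_{1\,1}]=0$, $\mathbb E[Y_{1\,1}^2]=1$, let $l\in\mathbb N$, assume $\mathbb E[Y_{1\,1}^{2l}]<\infty$ and set $\alpha=\mathbb E[Y_{1\,1}^4]$. For $p\le n$ let $\mathbf S_{p,n}=\frac1n\mathbf X_{p,n}\mathbf X_{p,n}^T$ with $\mathbf X_{p,n}=(Y_{i\,j})_{i\le p,j\le n}$. For fixed $p\in\mathbb N$, as $n\to\infty$, $$\mathbb E[\operatorname{tr}(\mathbf S_{p,n}^l)]=p+\frac{pl}{2n}\big(\alpha(l-1)+lp-2l-p+2\big)+\mathcal O\Big(\frac1{n^2}\Big).$$ *)

theory Defs
  imports "HOL-Probability.Probability" "HOL-Library.Landau_Symbols"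
begin

text \<open>Square p x p real matrices are represented as functions nat => nat => real,
  only entries with indices below p being relevant.\<close>

definition mat_mult :: "nat \<Rightarrow> (nat \<Rightarrow> nat \<Rightarrow> real) \<Rightarrow> (nat \<Rightarrow> nat \<Rightarrow> real) \<Rightarrow> (nat \<Rightarrow> nat \<Rightarrow> real)" where
  "mat_mult p A B = (\<lambda>i k. \<Sum>m<p. A i m * B m k)"

primrec mat_pow :: "nat \<Rightarrow> (nat \<Rightarrow> nat \<Rightarrow> real) \<Rightarrow> nat \<Rightarrow> (nat \<Rightarrow> nat \<Rightarrow> real)" where
  "mat_pow p A 0 = (\<lambda>i k. if i = k then 1 else 0)"
| "mat_pow p A (Suc l) = mat_mult p (mat_pow p A l) A"

definition mat_trace :: "nat \<Rightarrow> (nat \<Rightarrow> nat \<Rightarrow> real) \<Rightarrow> real" where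
  "mat_trace p A = (\<Sum>i<p. A i i)"

definition sample_cov :: "(nat \<Rightarrow> nat \<Rightarrow> 'a \<Rightarrow> real) \<Rightarrow> nat \<Rightarrow> 'a \<Rightarrow> (nat \<Rightarrow> nat \<Rightarrow> real)" where
  "sample_cov Y n w = (\<lambda>i k. (1 / real n) * (\<Sum>j<n. Y i j w * Y k j w))"

end

theory Submission
  imports Defs
begin

(* Write S = I + D with D = (1/n) (Z_0 + ... + Z_(n-1)), where Z_j = y_j y_j^T - I (col_dev) is the
   centred outer product of the j-th column. Since I and D commute, the binomial theorem gives
   tr S^l = sum_k (l choose k) n^(-k) sum_(j_1..j_k) tr (Z_(j_1) ... Z_(j_k)).
   A word Z_(j_1) ... Z_(j_k) in which some column index occurs only once has expectation zero:
   by cyclicity of the trace that factor can be moved to the end, where it is independent of the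
   others and centred. Hence k = 1 contributes nothing, k = 2 contributes n E tr Z_j^2 =
   n p (alpha + p - 2), and for k >= 3 only O(n^(k-2)) index tuples survive, each with expectation
   bounded by moments of order at most 2l; they add up to O(n^-2). *)

section \<open>Products of square matrices\<close>

text \<open>Entries outside the \<open>p \<times> p\<close> block are junk (e.g. \<open>mat_mult p A 1\<close> and \<open>A\<close> differ
  there), so identities between matrix expressions are stated blockwise via \<open>mat_eq\<close>.\<close>

definition mat_eq :: "nat \<Rightarrow> (nat \<Rightarrow> nat \<Rightarrow> real) \<Rightarrow> (nat \<Rightarrow> nat \<Rightarrow> real) \<Rightarrow> bool" where
  "mat_eq p A B \<longleftrightarrow> (\<forall>a<p. \<forall>b<p. A a b = B a b)"

lemma mat_eq_refl [simp]: "mat_eq p A A"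
  by (simp add: mat_eq_def)

lemma mat_eq_sym: "mat_eq p A B \<Longrightarrow> mat_eq p B A"
  by (simp add: mat_eq_def)

lemma mat_mult_cong: "mat_eq p A A' \<Longrightarrow> mat_eq p B B' \<Longrightarrow> mat_eq p (mat_mult p A B) (mat_mult p A' B')"
  by (simp add: mat_eq_def mat_mult_def)

lemma mat_trace_cong: "mat_eq p A B \<Longrightarrow> mat_trace p A = mat_trace p B"
  by (simp add: mat_eq_def mat_trace_def)

lemma mat_mult_assoc: "mat_mult p (mat_mult p A B) C = mat_mult p A (mat_mult p B C)"
  unfolding mat_mult_def
  by (auto simp: sum_distrib_left sum_distrib_right mult.assoc intro!: ext sum.swap)

lemma mat_mult_one_right: "b < p \<Longrightarrow> mat_mult p A (\<lambda>a b. if a = b then 1 else 0) a b = A a b"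
  by (simp add: mat_mult_def if_distrib cong: if_cong)

lemma mat_trace_mult_commute: "mat_trace p (mat_mult p A B) = mat_trace p (mat_mult p B A)"
  unfolding mat_trace_def mat_mult_def
  by (subst sum.swap) (simp add: mult.commute)

lemma mat_trace_sum: "mat_trace p (\<lambda>a b. \<Sum>x\<in>S. f x a b) = (\<Sum>x\<in>S. mat_trace p (f x))"
  unfolding mat_trace_def by (rule sum.swap)

primrec mat_prod :: "nat \<Rightarrow> (nat \<Rightarrow> nat \<Rightarrow> nat \<Rightarrow> real) \<Rightarrow> nat \<Rightarrow> nat \<Rightarrow> nat \<Rightarrow> real" where
  "mat_prod p B 0 = (\<lambda>a b. if a = b then 1 else 0)"
| "mat_prod p B (Suc k) = mat_mult p (mat_prod p B k) (B k)"

lemma mat_prod_cong: "(\<And>t. t < k \<Longrightarrow> B t = C t) \<Longrightarrow> mat_prod p B k = mat_prod p C k"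
  by (induction k) auto

lemma mat_prod_one:
  assumes "a < p"
  shows "mat_prod p B 1 a b = B 0 a b"
proof -
  have "mat_prod p B 1 a b = (\<Sum>m<p. (if a = m then 1 else 0) * B 0 m b)"
    unfolding One_nat_def mat_prod.simps mat_mult_def by simp
  also have "\<dots> = (\<Sum>m<p. if m = a then B 0 a b else 0)"
    by (rule sum.cong) auto
  finally show ?thesis
    using assms by simp
qed

lemma mat_prod_add:
  "mat_eq p (mat_prod p B (k + r)) (mat_mult p (mat_prod p B k) (mat_prod p (\<lambda>s. B (k + s)) r))"
proof (induction r)
  case 0
  show ?case
    by (simp add: mat_eq_def mat_mult_one_right)
next
  case (Suc r)
  then show ?case
    using mat_mult_cong[OF Suc.IH mat_eq_refl] by (simp add: mat_mult_assoc)
qed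

lemma mat_trace_mat_prod_rotate:
  assumes "r \<le> k"
  shows "mat_trace p (mat_prod p B k) = mat_trace p (mat_prod p (\<lambda>s. B ((s + r) mod k)) k)"
proof -
  define C where "C = (\<lambda>s. B ((s + r) mod k))"
  have "mat_trace p (mat_prod p B (r + (k - r))) =
      mat_trace p (mat_mult p (mat_prod p B r) (mat_prod p (\<lambda>s. B (r + s)) (k - r)))"
    by (rule mat_trace_cong[OF mat_prod_add])
  also have "\<dots> = mat_trace p (mat_mult p (mat_prod p (\<lambda>s. B (r + s)) (k - r)) (mat_prod p B r))"
    by (rule mat_trace_mult_commute)
  also have "mat_prod p (\<lambda>s. B (r + s)) (k - r) = mat_prod p C (k - r)"
    by (rule mat_prod_cong) (simp add: C_def add.commute)
  also have "mat_prod p B r = mat_prod p (\<lambda>s. C (k - r + s)) r"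
    using assms by (intro mat_prod_cong) (simp add: C_def)
  also have "mat_trace p (mat_mult p (mat_prod p C (k - r)) (mat_prod p (\<lambda>s. C (k - r + s)) r)) =
      mat_trace p (mat_prod p C (k - r + r))"
    by (rule mat_trace_cong[OF mat_eq_sym[OF mat_prod_add]])
  finally show ?thesis
    using assms by (simp add: C_def)
qed

lemma abs_mat_prod_le:
  assumes "\<And>t a b. t < k \<Longrightarrow> a < p \<Longrightarrow> b < p \<Longrightarrow> \<bar>B t a b\<bar> \<le> c" and "a < p" "b < p"
  shows "\<bar>mat_prod p B k a b\<bar> \<le> (real p * c) ^ k"
  using assms(1,3)
proof (induction k arbitrary: b)
  case 0
  then show ?case by simp
next
  case (Suc k)
  have "\<bar>mat_prod p B (Suc k) a b\<bar> \<le> (\<Sum>m<p. \<bar>mat_prod p B k a m\<bar> * \<bar>B k m b\<bar>)"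
    unfolding mat_prod.simps mat_mult_def by (rule order_trans[OF sum_abs]) (simp add: abs_mult)
  also have "\<dots> \<le> (\<Sum>m<p. (real p * c) ^ k * c)"
    using Suc by (intro sum_mono mult_mono) (auto intro: order_trans[OF abs_ge_zero])
  also have "\<dots> = (real p * c) ^ Suc k"
    by simp
  finally show ?case .
qed

lemma sum_PiE_lessThan_Suc:
  "(\<Sum>js\<in>PiE {..<Suc k} (\<lambda>_. A). f js) = (\<Sum>js\<in>PiE {..<k} (\<lambda>_. A). \<Sum>j\<in>A. f (js(k := j)))"
proof -
  have "PiE {..<Suc k} (\<lambda>_. A) = (\<lambda>(j, js). js(k := j)) ` (A \<times> PiE {..<k} (\<lambda>_. A))"
    using PiE_insert_eq[of k "{..<k}" "\<lambda>_. A"] by (simp add: lessThan_Suc)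
  then have "(\<Sum>js\<in>PiE {..<Suc k} (\<lambda>_. A). f js) = (\<Sum>x\<in>A \<times> PiE {..<k} (\<lambda>_. A). f ((\<lambda>(j, js). js(k := j)) x))"
    by (simp add: sum.reindex inj_combinator[of k "{..<k}" "\<lambda>_. A"])
  also have "\<dots> = (\<Sum>j\<in>A. \<Sum>js\<in>PiE {..<k} (\<lambda>_. A). f (js(k := j)))"
    by (simp add: sum.cartesian_product split_beta')
  also have "\<dots> = (\<Sum>js\<in>PiE {..<k} (\<lambda>_. A). \<Sum>j\<in>A. f (js(k := j)))"
    by (rule sum.swap)
  finally show ?thesis .
qed

lemma mat_pow_scaled_sum:
  "mat_pow p (\<lambda>a b. c * (\<Sum>j<n. Z j a b)) k =
   (\<lambda>a b. c ^ k * (\<Sum>js\<in>PiE {..<k} (\<lambda>_. {..<n}). mat_prod p (\<lambda>t. Z (js t)) k a b))"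
proof (induction k)
  case 0
  then show ?case by auto
next
  case (Suc k)
  have prod_upd: "mat_prod p (\<lambda>t. Z ((js(k := j)) t)) (Suc k) =
      mat_mult p (mat_prod p (\<lambda>t. Z (js t)) k) (Z j)" for js j
    using mat_prod_cong[of k "\<lambda>t. Z ((js(k := j)) t)" "\<lambda>t. Z (js t)"] by simp
  show ?case
  proof (intro ext)
    fix a b
    have "mat_pow p (\<lambda>a b. c * (\<Sum>j<n. Z j a b)) (Suc k) a b =
        (\<Sum>m<p. (c ^ k * (\<Sum>js\<in>PiE {..<k} (\<lambda>_. {..<n}). mat_prod p (\<lambda>t. Z (js t)) k a m)) * (c * (\<Sum>j<n. Z j m b)))"
      by (simp add: Suc.IH mat_mult_def)
    also have "\<dots> = c ^ Suc k * (\<Sum>m<p. \<Sum>js\<in>PiE {..<k} (\<lambda>_. {..<n}). \<Sum>j<n. mat_prod p (\<lambda>t. Z (js t)) k a m * Z j m b)"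
      by (simp add: sum_distrib_left sum_product mult_ac)
    also have "\<dots> = c ^ Suc k * (\<Sum>js\<in>PiE {..<k} (\<lambda>_. {..<n}). \<Sum>j<n. \<Sum>m<p. mat_prod p (\<lambda>t. Z (js t)) k a m * Z j m b)"
      by (subst sum.swap, subst (2) sum.swap) (rule refl)
    also have "\<dots> = c ^ Suc k * (\<Sum>js\<in>PiE {..<k} (\<lambda>_. {..<n}). \<Sum>j<n. mat_prod p (\<lambda>t. Z ((js(k := j)) t)) (Suc k) a b)"
      by (simp only: prod_upd) (simp add: mat_mult_def)
    also have "\<dots> = c ^ Suc k * (\<Sum>js\<in>PiE {..<Suc k} (\<lambda>_. {..<n}). mat_prod p (\<lambda>t. Z (js t)) (Suc k) a b)"
      by (simp only: sum_PiE_lessThan_Suc)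
    finally show "mat_pow p (\<lambda>a b. c * (\<Sum>j<n. Z j a b)) (Suc k) a b =
        c ^ Suc k * (\<Sum>js\<in>PiE {..<Suc k} (\<lambda>_. {..<n}). mat_prod p (\<lambda>t. Z (js t)) (Suc k) a b)" .
  qed
qed

lemma sum_binomial_Suc:
  fixes x :: "nat \<Rightarrow> real"
  shows "(\<Sum>k\<le>Suc l. real (Suc l choose k) * x k) =
         (\<Sum>k\<le>l. real (l choose k) * x k) + (\<Sum>k\<le>l. real (l choose k) * x (Suc k))"
proof -
  have shift: "(\<Sum>k\<le>m. f k) = f 0 + (\<Sum>k<m. f (Suc k))" for f :: "nat \<Rightarrow> real" and m
    unfolding lessThan_Suc_atMost[symmetric] sum.lessThan_Suc_shift ..
  have "(\<Sum>k\<le>Suc l. real (Suc l choose k) * x k) =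
      x 0 + (\<Sum>k<Suc l. real (l choose Suc k) * x (Suc k)) + (\<Sum>k<Suc l. real (l choose k) * x (Suc k))"
    by (simp only: shift binomial_Suc_Suc of_nat_add ring_distribs sum.distrib) simp
  moreover have "x 0 + (\<Sum>k<Suc l. real (l choose Suc k) * x (Suc k)) = (\<Sum>k\<le>l. real (l choose k) * x k)"
    by (simp add: shift)
  ultimately show ?thesis
    by (simp add: lessThan_Suc_atMost)
qed

lemma mat_pow_one_plus:
  "mat_eq p (mat_pow p (\<lambda>a b. (if a = b then 1 else 0) + D a b) l)
     (\<lambda>a b. \<Sum>k\<le>l. real (l choose k) * mat_pow p D k a b)"
proof (induction l)
  case 0
  then show ?case by simp
next
  case (Suc l)
  let ?I = "\<lambda>a b. if a = b then 1 else (0::real)"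
  let ?X = "\<lambda>a b. ?I a b + D a b"
  show ?case
    unfolding mat_eq_def
  proof (intro allI impI)
    fix a b assume ab: "a < p" "b < p"
    have "mat_pow p ?X (Suc l) a b = (\<Sum>m<p. (\<Sum>k\<le>l. real (l choose k) * mat_pow p D k a m) * ?X m b)"
      using Suc.IH ab by (simp add: mat_mult_def mat_eq_def)
    also have "\<dots> = (\<Sum>k\<le>l. real (l choose k) * (\<Sum>m<p. mat_pow p D k a m * ?X m b))"
      by (simp only: sum_distrib_right sum_distrib_left mult.assoc) (rule sum.swap)
    also have "\<dots> = (\<Sum>k\<le>l. real (l choose k) * (mat_mult p (mat_pow p D k) ?I a b + mat_mult p (mat_pow p D k) D a b))"
      by (simp only: mat_mult_def ring_distribs sum.distrib)
    also have "\<dots> = (\<Sum>k\<le>l. real (l choose k) * (mat_pow p D k a b + mat_pow p D (Suc k) a b))"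
      using ab by (simp add: mat_mult_one_right)
    also have "\<dots> = (\<Sum>k\<le>Suc l. real (Suc l choose k) * mat_pow p D k a b)"
      by (simp only: sum_binomial_Suc distrib_left sum.distrib)
    finally show "mat_pow p ?X (Suc l) a b = (\<Sum>k\<le>Suc l. real (Suc l choose k) * mat_pow p D k a b)" .
  qed
qed

section \<open>Index tuples without singletons\<close>

definition tuples_without_singleton :: "nat \<Rightarrow> nat \<Rightarrow> (nat \<Rightarrow> nat) set" where
  "tuples_without_singleton k n =
     {js \<in> PiE {..<k} (\<lambda>_. {..<n}). \<forall>t<k. \<exists>t'<k. t' \<noteq> t \<and> js t' = js t}"

lemma inj_on_restrict_two_coincidences:
  assumes "a' \<in> I - {a, b}" "b' \<in> I - {a, b}"
  shows "inj_on (\<lambda>js. restrict js (I - {a, b})) {js \<in> PiE I A. js a = js a' \<and> js b = js b'}"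
proof (rule inj_onI)
  fix f g assume "f \<in> {js \<in> PiE I A. js a = js a' \<and> js b = js b'}" "g \<in> {js \<in> PiE I A. js a = js a' \<and> js b = js b'}"
    and eq: "restrict f (I - {a, b}) = restrict g (I - {a, b})"
  then have f: "f \<in> PiE I A" "f a = f a'" "f b = f b'" and g: "g \<in> PiE I A" "g a = g a'" "g b = g b'"
    by simp_all
  have R: "f x = g x" if "x \<in> I - {a, b}" for x
    using fun_cong[OF eq, of x] that by simp
  show "f = g"
  proof
    fix x
    show "f x = g x"
    proof (cases "x \<in> I - {a, b}")
      case False
      then consider "x \<notin> I" | "x = a" | "x = b"
        by auto
      then show ?thesis
      proof cases
        case 1
        then show ?thesis
          using PiE_arb[OF f(1)] PiE_arb[OF g(1)] by simp
      next
        case 2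
        then show ?thesis
          using f(2) g(2) R[OF assms(1)] by simp
      next
        case 3
        then show ?thesis
          using f(3) g(3) R[OF assms(2)] by simp
      qed
    qed (rule R)
  qed
qed

lemma card_tuples_with_two_coincidences:
  assumes "a < k" "b < k" "a' < k" "b' < k" "a \<noteq> b" "a' \<notin> {a, b}" "b' \<notin> {a, b}"
  shows "card {js \<in> PiE {..<k} (\<lambda>_. {..<n}). js a = js a' \<and> js b = js b'} \<le> n ^ (k - 2)"
proof -
  let ?S = "{js \<in> PiE {..<k} (\<lambda>_. {..<n}). js a = js a' \<and> js b = js b'}"
  let ?R = "{..<k} - {a, b}"
  have "inj_on (\<lambda>js. restrict js ?R) ?S"
    using assms by (intro inj_on_restrict_two_coincidences) auto
  moreover have "(\<lambda>js. restrict js ?R) ` ?S \<subseteq> PiE ?R (\<lambda>_. {..<n})"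
    by (rule image_subsetI, subst restrict_PiE_iff) (auto simp: PiE_iff)
  ultimately have "card ?S \<le> card (PiE ?R (\<lambda>_. {..<n}))"
    by (intro card_inj_on_le finite_PiE) auto
  also have "\<dots> = n ^ card ?R"
    by (simp add: card_PiE)
  also have "card ?R = k - 2"
    using assms by (subst card_Diff_subset) auto
  finally show ?thesis .
qed

text \<open>If no value of \<open>js\<close> occurs exactly once, then either \<open>js 0\<close> occurs three times, or
  \<open>js 0\<close> and the value at position 1 or 2 each occur twice.\<close>

lemma tuple_without_singleton_two_coincidences:
  assumes "3 \<le> k" "js \<in> tuples_without_singleton k n"
  obtains a b a' b' where "a < k" "b < k" "a' < k" "b' < k" "a \<noteq> b" "a' \<notin> {a, b}" "b' \<notin> {a, b}"
    and "js a = js a'" "js b = js b'"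
proof -
  have no_singleton: "\<exists>t'<k. t' \<noteq> t \<and> js t' = js t" if "t < k" for t
    using assms(2) that by (auto simp: tuples_without_singleton_def)
  obtain s where s: "s < k" "s \<noteq> 0" "js s = js 0"
    using no_singleton[of 0] assms(1) by auto
  show ?thesis
  proof (cases "\<exists>u<k. u \<notin> {0, s} \<and> js u = js 0")
    case True
    then obtain u where "u < k" "u \<notin> {0, s}" "js u = js 0"
      by blast
    then show ?thesis
      using s assms(1) by (intro that[of s u 0 0]) auto
  next
    case False
    define t where "t = (if s = 1 then 2 else (1::nat))"
    have t: "t < k" "t \<notin> {0, s}"
      using assms(1) s by (auto simp: t_def)
    with False have "js t \<noteq> js 0"
      by blast
    obtain u where u: "u < k" "u \<noteq> t" "js u = js t"
      using no_singleton[OF t(1)] by auto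
    have "u \<notin> {0, s}"
    proof
      assume "u \<in> {0, s}"
      then have "js u = js 0"
        using s(3) by blast
      with u(3) \<open>js t \<noteq> js 0\<close> show False
        by simp
    qed
    with s t u show ?thesis
      by (intro that[of s u 0 t]) auto
  qed
qed

lemma card_tuples_without_singleton_le:
  assumes "3 \<le> k"
  shows "card (tuples_without_singleton k n) \<le> k ^ 4 * n ^ (k - 2)"
proof -
  define Q where "Q = {(a, b, a', b'). a < k \<and> b < k \<and> a' < k \<and> b' < k \<and> a \<noteq> b \<and> a' \<notin> {a, b} \<and> b' \<notin> {a, b}}"
  define S where "S = (\<lambda>(a, b, a', b'). {js \<in> PiE {..<k} (\<lambda>_. {..<n}). js a = js a' \<and> js b = js b'})"
  have Q_sub: "Q \<subseteq> {..<k} \<times> {..<k} \<times> {..<k} \<times> {..<k}"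
    by (auto simp: Q_def)
  then have "finite Q"
    by (rule finite_subset) auto
  have "tuples_without_singleton k n \<subseteq> (\<Union>q\<in>Q. S q)"
  proof
    fix js assume js: "js \<in> tuples_without_singleton k n"
    then have "js \<in> PiE {..<k} (\<lambda>_. {..<n})"
      by (simp add: tuples_without_singleton_def)
    obtain a b a' b' where "a < k" "b < k" "a' < k" "b' < k" "a \<noteq> b" "a' \<notin> {a, b}" "b' \<notin> {a, b}"
      and "js a = js a'" "js b = js b'"
      by (rule tuple_without_singleton_two_coincidences[OF assms js])
    then have "(a, b, a', b') \<in> Q" "js \<in> S (a, b, a', b')"
      using \<open>js \<in> PiE {..<k} (\<lambda>_. {..<n})\<close> by (simp_all add: Q_def S_def)
    then show "js \<in> (\<Union>q\<in>Q. S q)"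
      by blast
  qed
  then have "card (tuples_without_singleton k n) \<le> card (\<Union>q\<in>Q. S q)"
    using \<open>finite Q\<close> by (intro card_mono) (auto simp: S_def intro!: finite_PiE)
  also have "\<dots> \<le> (\<Sum>q\<in>Q. card (S q))"
    using \<open>finite Q\<close> by (rule card_UN_le)
  also have "\<dots> \<le> (\<Sum>q\<in>Q. n ^ (k - 2))"
    by (intro sum_mono) (auto simp: Q_def S_def intro!: card_tuples_with_two_coincidences)
  also have "\<dots> = card Q * n ^ (k - 2)"
    by simp
  also have "card Q \<le> card ({..<k} \<times> {..<k} \<times> {..<k} \<times> {..<k})"
    using Q_sub by (intro card_mono) auto
  also have "\<dots> = k ^ 4"
    by (simp add: card_cartesian_product power4_eq_xxxx)
  finally show ?thesis
    by (simp add: mult_right_mono)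
qed

lemma one_plus_abs_power_le:
  fixes y :: real
  assumes "m \<le> 2 * q"
  shows "(1 + \<bar>y\<bar>) ^ m \<le> 2 ^ m * (1 + y ^ (2 * q))"
proof -
  have "(1 + \<bar>y\<bar>) ^ m \<le> (2 * max 1 \<bar>y\<bar>) ^ m"
    by (intro power_mono) auto
  also have "\<dots> = 2 ^ m * max 1 \<bar>y\<bar> ^ m"
    by (simp add: power_mult_distrib)
  also have "max 1 \<bar>y\<bar> ^ m \<le> max 1 \<bar>y\<bar> ^ (2 * q)"
    using assms by (intro power_increasing) auto
  also have "\<dots> \<le> 1 + y ^ (2 * q)"
    by (cases "\<bar>y\<bar> \<le> 1") (simp_all add: max_def power_even_abs)
  finally show ?thesis
    by simp
qed

lemma power_Max_le_one_plus_sum: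
  fixes f :: "'b \<Rightarrow> real"
  assumes "finite A" "\<And>x. x \<in> A \<Longrightarrow> 0 \<le> f x"
  shows "Max (insert 1 (f ` A)) ^ m \<le> 1 + (\<Sum>x\<in>A. f x ^ m)"
proof -
  have "Max (insert 1 (f ` A)) \<in> insert 1 (f ` A)"
    using assms(1) by (intro Max_in) auto
  then consider "Max (insert 1 (f ` A)) = 1" | x where "x \<in> A" "Max (insert 1 (f ` A)) = f x"
    by auto
  then show ?thesis
  proof cases
    case 1
    then show ?thesis
      using assms(2) by (simp add: sum_nonneg)
  next
    case (2 x)
    have "f x ^ m \<le> (\<Sum>x\<in>A. f x ^ m)"
      using assms 2(1) by (intro member_le_sum) auto
    then show ?thesis
      using 2(2) by simp
  qed
qed

lemma real_choose_two: "real (l choose 2) = real l * (real l - 1) / 2"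
proof (induction l)
  case (Suc l)
  have "Suc l choose 2 = l + (l choose 2)"
    using binomial_Suc_Suc[of l 1] by (simp add: numeral_2_eq_2)
  then show ?case
    using Suc.IH by (simp add: field_simps)
qed simp

lemma binomial_expansion_bigo:
  fixes e :: "nat \<Rightarrow> nat \<Rightarrow> real" and C :: "nat \<Rightarrow> real"
  assumes e0: "\<And>n. e 0 n = a"
    and e1: "\<And>n. 1 \<le> l \<Longrightarrow> e 1 n = 0"
    and e2: "\<And>n. 2 \<le> l \<Longrightarrow> e 2 n = real n * b"
    and e_high: "\<And>k n. 3 \<le> k \<Longrightarrow> k \<le> l \<Longrightarrow> \<bar>e k n\<bar> \<le> C k * real n ^ (k - 2)"
  shows "(\<lambda>n. (\<Sum>k\<le>l. real (l choose k) * ((1 / real n) ^ k * e k n)) - (a + real (l choose 2) * b / real n))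
    \<in> O(\<lambda>n. 1 / (real n)\<^sup>2)"
proof -
  define g where "g k n = (if k = 0 then a else if k = 2 then real n * b else 0)" for k n :: nat
  have g_sum: "(\<Sum>k\<le>l. real (l choose k) * ((1 / real n) ^ k * g k n)) = a + real (l choose 2) * b / real n"
    if "1 \<le> n" for n
  proof -
    have "(\<Sum>k\<le>l. real (l choose k) * ((1 / real n) ^ k * g k n)) =
        (\<Sum>k\<le>l. (if k = 0 then a else 0) + (if k = 2 then real (l choose 2) * b / real n else 0))"
      using that by (intro sum.cong refl) (auto simp: g_def power2_eq_square)
    also have "\<dots> = a + real (l choose 2) * b / real n"
      by (simp add: sum.distrib binomial_eq_0 not_le)
    finally show ?thesis .
  qed
  have summand_bigo: "(\<lambda>n. real (l choose k) * ((1 / real n) ^ k * (e k n - g k n))) \<in> O(\<lambda>n. 1 / (real n)\<^sup>2)"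
    if "k \<le> l" for k
  proof (cases "k \<le> 2")
    case True
    then have "k = 0 \<or> k = 1 \<or> k = 2"
      by auto
    then have "e k n = g k n" for n
      using that e0 e1 e2 by (auto simp: g_def)
    then show ?thesis
      by simp
  next
    case False
    have "\<bar>real (l choose k) * ((1 / real n) ^ k * (e k n - g k n))\<bar> \<le> real (l choose k) * C k * (1 / (real n)\<^sup>2)"
      if "1 \<le> n" for n
    proof -
      have "\<bar>real (l choose k) * ((1 / real n) ^ k * (e k n - g k n))\<bar> = real (l choose k) * (\<bar>e k n\<bar> / real n ^ k)"
        using False by (simp add: g_def abs_mult power_one_over)
      also have "\<dots> \<le> real (l choose k) * (C k * real n ^ (k - 2) / real n ^ k)"
        using e_high[of k n] False \<open>k \<le> l\<close> by (intro mult_left_mono divide_right_mono) auto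
      also have "real n ^ k = real n ^ (k - 2) * (real n)\<^sup>2"
        using False by (metis le_add_diff_inverse2 nat_le_linear power_add)
      finally show ?thesis
        using that by simp
    qed
    then show ?thesis
      by (intro bigoI[where c = "real (l choose k) * C k"] eventually_mono[OF eventually_ge_at_top[of 1]]) simp
  qed
  have "(\<lambda>n. \<Sum>k\<le>l. real (l choose k) * ((1 / real n) ^ k * (e k n - g k n))) \<in> O(\<lambda>n. 1 / (real n)\<^sup>2)"
    by (intro big_sum_in_bigo summand_bigo) simp
  moreover have "\<forall>\<^sub>F n in at_top. (\<Sum>k\<le>l. real (l choose k) * ((1 / real n) ^ k * (e k n - g k n))) =
      (\<Sum>k\<le>l. real (l choose k) * ((1 / real n) ^ k * e k n)) - (a + real (l choose 2) * b / real n)"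
    using eventually_ge_at_top[of "1::nat"]
  proof eventually_elim
    case (elim n)
    show ?case
      unfolding g_sum[OF elim, symmetric] by (simp add: sum_subtractf right_diff_distrib)
  qed
  ultimately show ?thesis
    by (rule iffD1[OF landau_o.big.in_cong, rotated])
qed

section \<open>Words in the centred column outer products\<close>

definition col_dev :: "(nat \<times> nat \<Rightarrow> real) \<Rightarrow> nat \<Rightarrow> nat \<Rightarrow> nat \<Rightarrow> real" where
  "col_dev y j a b = y (a, j) * y (b, j) - (if a = b then 1 else 0)"

definition word_trace :: "nat \<Rightarrow> (nat \<times> nat \<Rightarrow> real) \<Rightarrow> (nat \<Rightarrow> nat) \<Rightarrow> nat \<Rightarrow> real" where
  "word_trace p y js k = mat_trace p (mat_prod p (\<lambda>t. col_dev y (js t)) k)"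

definition word_dom :: "nat \<Rightarrow> (nat \<times> nat \<Rightarrow> real) \<Rightarrow> (nat \<Rightarrow> nat) \<Rightarrow> nat \<Rightarrow> real" where
  "word_dom p y js k = real p ^ k * (1 + (\<Sum>t<k. \<Sum>i<p. (1 + \<bar>y (i, js t)\<bar>) ^ (2 * k)))"

lemma abs_col_dev_le: "\<bar>col_dev y j a b\<bar> \<le> (1 + \<bar>y (a, j)\<bar>) * (1 + \<bar>y (b, j)\<bar>)"
proof -
  have "\<bar>col_dev y j a b\<bar> \<le> \<bar>y (a, j)\<bar> * \<bar>y (b, j)\<bar> + 1"
    unfolding col_dev_def by (rule order_trans[OF abs_triangle_ineq4]) (simp add: abs_mult)
  also have "\<dots> \<le> (1 + \<bar>y (a, j)\<bar>) * (1 + \<bar>y (b, j)\<bar>)"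
    by (simp add: algebra_simps)
  finally show ?thesis .
qed

lemma abs_mat_prod_col_dev_le:
  assumes "a < p" "b < p"
  shows "\<bar>mat_prod p (\<lambda>t. col_dev y (js t)) k a b\<bar> \<le> word_dom p y js k"
proof -
  define f where "f = (\<lambda>(t, i). 1 + \<bar>y (i, js t)\<bar>)"
  define W where "W = Max (insert 1 (f ` ({..<k} \<times> {..<p})))"
  have W_ge: "1 + \<bar>y (i, js t)\<bar> \<le> W" if "i < p" "t < k" for i t
    unfolding W_def using that by (intro Max_ge) (auto simp: f_def intro!: image_eqI[where x = "(t, i)"])
  have "\<bar>col_dev y (js t) a' b'\<bar> \<le> W\<^sup>2" if "t < k" "a' < p" "b' < p" for t a' b'
    using abs_col_dev_le[of y "js t" a' b'] W_ge[of a' t] W_ge[of b' t] that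
    by (smt (verit) mult_mono power2_eq_square)
  then have "\<bar>mat_prod p (\<lambda>t. col_dev y (js t)) k a b\<bar> \<le> (real p * W\<^sup>2) ^ k"
    using assms by (intro abs_mat_prod_le) auto
  also have "\<dots> = real p ^ k * W ^ (2 * k)"
    by (simp add: power_mult_distrib power_mult)
  also have "W ^ (2 * k) \<le> 1 + (\<Sum>x\<in>{..<k} \<times> {..<p}. f x ^ (2 * k))"
    unfolding W_def by (rule power_Max_le_one_plus_sum) (auto simp: f_def)
  also have "(\<Sum>x\<in>{..<k} \<times> {..<p}. f x ^ (2 * k)) = (\<Sum>t<k. \<Sum>i<p. (1 + \<bar>y (i, js t)\<bar>) ^ (2 * k))"
    by (simp add: f_def sum.cartesian_product split_def)
  finally show ?thesis
    by (simp add: word_dom_def mult_left_mono)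
qed

lemma measurable_mat_prod_col_dev:
  assumes "\<And>x. (\<lambda>\<omega>. y \<omega> x) \<in> borel_measurable N"
  shows "(\<lambda>\<omega>. mat_prod p (\<lambda>t. col_dev (y \<omega>) (js t)) k a b) \<in> borel_measurable N"
proof (induction k arbitrary: b)
  case 0
  then show ?case
    by simp
next
  case (Suc k)
  have "(\<lambda>\<omega>. col_dev (y \<omega>) (js k) m b) \<in> borel_measurable N" for m
    unfolding col_dev_def by (intro borel_measurable_diff borel_measurable_times assms) auto
  then show ?case
    unfolding mat_prod.simps mat_mult_def by (intro borel_measurable_sum borel_measurable_times Suc.IH)
qed

section \<open>Expected words of an i.i.d. array\<close>

locale iid_array = prob_space M for M :: "'a measure" +
  fixes Y :: "nat \<Rightarrow> nat \<Rightarrow> 'a \<Rightarrow> real" and l :: nat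
  assumes rv: "\<And>i j. Y i j \<in> borel_measurable M"
    and indep: "indep_vars (\<lambda>_. borel) (\<lambda>(i, j). Y i j) UNIV"
    and ident: "\<And>i j. distr M borel (Y i j) = distr M borel (Y 0 0)"
    and mean: "expectation (Y 0 0) = 0"
    and var: "expectation (\<lambda>w. (Y 0 0 w)^2) = 1"
    and sq_int: "integrable M (\<lambda>w. (Y 0 0 w)^2)"
    and mom: "integrable M (\<lambda>w. (Y 0 0 w)^(2*l))"
begin

definition sample :: "'a \<Rightarrow> nat \<times> nat \<Rightarrow> real" where
  "sample w = (\<lambda>(i, j). Y i j w)"

lemma sample_apply [simp]: "sample w (i, j) = Y i j w"
  by (simp add: sample_def)

lemma
  fixes g :: "real \<Rightarrow> real"
  assumes "g \<in> borel_measurable borel"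
  shows expectation_comp_entry: "expectation (\<lambda>w. g (Y i j w)) = expectation (\<lambda>w. g (Y 0 0 w))"
    and integrable_comp_entry_iff: "integrable M (\<lambda>w. g (Y i j w)) \<longleftrightarrow> integrable M (\<lambda>w. g (Y 0 0 w))"
  using integral_distr[OF rv[of i j] assms] integral_distr[OF rv[of 0 0] assms]
    integrable_distr_eq[OF rv[of i j] assms] integrable_distr_eq[OF rv[of 0 0] assms] ident[of i j]
  by simp_all

lemma integrable_entry_sq: "integrable M (\<lambda>w. (Y i j w)\<^sup>2)"
  and expectation_entry_sq: "expectation (\<lambda>w. (Y i j w)\<^sup>2) = 1"
  using expectation_comp_entry[of "\<lambda>x. x\<^sup>2" i j] integrable_comp_entry_iff[of "\<lambda>x. x\<^sup>2" i j] sq_int var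
  by auto

lemma integrable_entry: "integrable M (Y i j)"
  by (rule square_integrable_imp_integrable[OF rv integrable_entry_sq])

lemma expectation_entry: "expectation (Y i j) = 0"
  using expectation_comp_entry[of "\<lambda>x. x" i j] mean by simp

definition abs_moment :: "nat \<Rightarrow> real" where
  "abs_moment m = expectation (\<lambda>w. (1 + \<bar>Y 0 0 w\<bar>) ^ m)"

lemma
  assumes "m \<le> 2 * l"
  shows integrable_one_plus_abs_power: "integrable M (\<lambda>w. (1 + \<bar>Y i j w\<bar>) ^ m)"
    and expectation_one_plus_abs_power: "expectation (\<lambda>w. (1 + \<bar>Y i j w\<bar>) ^ m) = abs_moment m"
proof -
  have g: "(\<lambda>x::real. (1 + \<bar>x\<bar>) ^ m) \<in> borel_measurable borel"
    by measurable
  have "integrable M (\<lambda>w. (1 + \<bar>Y 0 0 w\<bar>) ^ m)"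
  proof (rule Bochner_Integration.integrable_bound)
    show "integrable M (\<lambda>w. 2 ^ m * (1 + Y 0 0 w ^ (2 * l)))"
      using mom by auto
    show "AE w in M. norm ((1 + \<bar>Y 0 0 w\<bar>) ^ m) \<le> norm (2 ^ m * (1 + Y 0 0 w ^ (2 * l)))"
      using one_plus_abs_power_le[OF assms] by (intro AE_I2) (simp add: power_mult)
  qed (use rv in measurable)
  then show "integrable M (\<lambda>w. (1 + \<bar>Y i j w\<bar>) ^ m)"
    using integrable_comp_entry_iff[OF g, of i j] by simp
  show "expectation (\<lambda>w. (1 + \<bar>Y i j w\<bar>) ^ m) = abs_moment m"
    using expectation_comp_entry[OF g, of i j] by (simp add: abs_moment_def)
qed

definition word_bound :: "nat \<Rightarrow> nat \<Rightarrow> real" where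
  "word_bound p k = real p ^ k * (1 + real k * real p * abs_moment (2 * k))"

lemma word_bound_nonneg: "0 \<le> word_bound p k"
proof -
  have "0 \<le> abs_moment m" for m
    unfolding abs_moment_def by (rule Bochner_Integration.integral_nonneg) auto
  then show ?thesis
    unfolding word_bound_def by (intro mult_nonneg_nonneg add_nonneg_nonneg) auto
qed

lemma
  assumes "k \<le> l"
  shows integrable_word_dom: "integrable M (\<lambda>w. word_dom p (sample w) js k)"
    and expectation_word_dom: "expectation (\<lambda>w. word_dom p (sample w) js k) = word_bound p k"
proof -
  have int: "integrable M (\<lambda>w. (1 + \<bar>Y i (js t) w\<bar>) ^ (2 * k))" for i t
    using integrable_one_plus_abs_power assms by simp
  show "integrable M (\<lambda>w. word_dom p (sample w) js k)"
    unfolding word_dom_def using int by auto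
  have "expectation (\<lambda>w. word_dom p (sample w) js k) =
      real p ^ k * (1 + (\<Sum>t<k. \<Sum>i<p. expectation (\<lambda>w. (1 + \<bar>Y i (js t) w\<bar>) ^ (2 * k))))"
    unfolding word_dom_def using int
    by (simp add: Bochner_Integration.integral_sum Bochner_Integration.integrable_sum prob_space)
  also have "\<dots> = word_bound p k"
    using assms by (simp add: expectation_one_plus_abs_power word_bound_def)
  finally show "expectation (\<lambda>w. word_dom p (sample w) js k) = word_bound p k" .
qed

lemma
  assumes "k \<le> l" "a < p" "b < p"
  shows integrable_word_entry: "integrable M (\<lambda>w. mat_prod p (\<lambda>t. col_dev (sample w) (js t)) k a b)"
    and abs_expectation_word_entry_le:
      "\<bar>expectation (\<lambda>w. mat_prod p (\<lambda>t. col_dev (sample w) (js t)) k a b)\<bar> \<le> word_bound p k"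
proof -
  have bound: "\<bar>mat_prod p (\<lambda>t. col_dev (sample w) (js t)) k a b\<bar> \<le> word_dom p (sample w) js k" for w
    using assms(2,3) by (rule abs_mat_prod_col_dev_le)
  show int: "integrable M (\<lambda>w. mat_prod p (\<lambda>t. col_dev (sample w) (js t)) k a b)"
    using bound by (intro Bochner_Integration.integrable_bound[OF integrable_word_dom[OF assms(1), of p js]]
        measurable_mat_prod_col_dev AE_I2) (auto simp: rv intro: order_trans[OF _ abs_ge_self])
  have "\<bar>expectation (\<lambda>w. mat_prod p (\<lambda>t. col_dev (sample w) (js t)) k a b)\<bar> \<le>
      expectation (\<lambda>w. word_dom p (sample w) js k)"
    using int integrable_word_dom[OF assms(1)] bound
    by (intro order_trans[OF integral_abs_bound] Bochner_Integration.integral_mono) auto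
  then show "\<bar>expectation (\<lambda>w. mat_prod p (\<lambda>t. col_dev (sample w) (js t)) k a b)\<bar> \<le> word_bound p k"
    using expectation_word_dom[OF assms(1)] by simp
qed

lemma
  assumes "k \<le> l"
  shows integrable_word_trace: "integrable M (\<lambda>w. word_trace p (sample w) js k)"
    and abs_expectation_word_trace_le: "\<bar>expectation (\<lambda>w. word_trace p (sample w) js k)\<bar> \<le> real p * word_bound p k"
proof -
  show "integrable M (\<lambda>w. word_trace p (sample w) js k)"
    unfolding word_trace_def mat_trace_def using integrable_word_entry[OF assms] by auto
  have "\<bar>expectation (\<lambda>w. word_trace p (sample w) js k)\<bar> =
      \<bar>\<Sum>a<p. expectation (\<lambda>w. mat_prod p (\<lambda>t. col_dev (sample w) (js t)) k a a)\<bar>"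
    unfolding word_trace_def mat_trace_def using integrable_word_entry[OF assms]
    by (subst Bochner_Integration.integral_sum) auto
  also have "\<dots> \<le> (\<Sum>a<p. word_bound p k)"
    by (rule order_trans[OF sum_abs]) (intro sum_mono abs_expectation_word_entry_le[OF assms]; simp)
  finally show "\<bar>expectation (\<lambda>w. word_trace p (sample w) js k)\<bar> \<le> real p * word_bound p k"
    by simp
qed

lemma indep_var_column_split:
  fixes G H :: "(nat \<times> nat \<Rightarrow> real) \<Rightarrow> real"
  assumes G: "G \<in> borel_measurable (PiM UNIV (\<lambda>_. borel))"
    and H: "H \<in> borel_measurable (PiM UNIV (\<lambda>_. borel))"
    and G_dep: "\<And>y y'. (\<And>i j'. j' \<noteq> j \<Longrightarrow> y (i, j') = y' (i, j')) \<Longrightarrow> G y = G y'"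
    and H_dep: "\<And>y y'. (\<And>i. y (i, j) = y' (i, j)) \<Longrightarrow> H y = H y'"
  shows "indep_var borel (\<lambda>w. G (sample w)) borel (\<lambda>w. H (sample w))"
proof -
  define A where "A = {x :: nat \<times> nat. snd x \<noteq> j}"
  define B where "B = {x :: nat \<times> nat. snd x = j}"
  define X where "X = (\<lambda>(i, j). Y i j)"
  define extend where "extend S f = (\<lambda>x. if x \<in> S then f x else (0::real))" for S :: "(nat \<times> nat) set" and f
  have extend: "extend S \<in> measurable (PiM S (\<lambda>_. borel)) (PiM UNIV (\<lambda>_. borel))" for S
    unfolding extend_def
  proof (rule measurable_PiM_single')
    show "(\<lambda>f. if x \<in> S then f x else 0) \<in> borel_measurable (PiM S (\<lambda>_. borel))" for x
      by (cases "x \<in> S") auto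
  qed auto
  have "indep_var (PiM A (\<lambda>_. borel)) (\<lambda>\<omega>. restrict (\<lambda>i. X i \<omega>) A) (PiM B (\<lambda>_. borel)) (\<lambda>\<omega>. restrict (\<lambda>i. X i \<omega>) B)"
    by (rule indep_var_restrict[OF indep[folded X_def]]) (auto simp: A_def B_def)
  then have "indep_var borel (G \<circ> extend A \<circ> (\<lambda>\<omega>. restrict (\<lambda>i. X i \<omega>) A))
      borel (H \<circ> extend B \<circ> (\<lambda>\<omega>. restrict (\<lambda>i. X i \<omega>) B))"
    by (rule indep_var_compose) (auto intro: measurable_comp[OF extend G] measurable_comp[OF extend H])
  also have "G \<circ> extend A \<circ> (\<lambda>\<omega>. restrict (\<lambda>i. X i \<omega>) A) = (\<lambda>w. G (sample w))"
    by (rule ext, simp, rule G_dep) (simp add: extend_def A_def X_def)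
  also have "H \<circ> extend B \<circ> (\<lambda>\<omega>. restrict (\<lambda>i. X i \<omega>) B) = (\<lambda>w. H (sample w))"
    by (rule ext, simp, rule H_dep) (simp add: extend_def B_def X_def)
  finally show ?thesis .
qed

lemma integrable_col_dev: "integrable M (\<lambda>w. col_dev (sample w) j a b)"
  and expectation_col_dev: "expectation (\<lambda>w. col_dev (sample w) j a b) = 0"
proof -
  have "integrable M (\<lambda>w. Y a j w * Y b j w) \<and>
      expectation (\<lambda>w. Y a j w * Y b j w) = (if a = b then 1 else 0)"
  proof (cases "a = b")
    case True
    then show ?thesis
      using integrable_entry_sq[of a j] expectation_entry_sq[of a j] by (simp add: power2_eq_square)
  next
    case False
    have ind: "indep_vars (\<lambda>_. borel) (\<lambda>(i, j). Y i j) {(a, j), (b, j)}"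
      by (rule indep_vars_subset[OF indep]) auto
    have int: "\<And>x. x \<in> {(a, j), (b, j)} \<Longrightarrow> integrable M ((\<lambda>(i, j). Y i j) x)"
      using integrable_entry by auto
    show ?thesis
      using indep_vars_integrable[OF _ ind int] indep_vars_lebesgue_integral[OF _ ind int] False
      by (simp add: expectation_entry)
  qed
  then show "integrable M (\<lambda>w. col_dev (sample w) j a b)"
    and "expectation (\<lambda>w. col_dev (sample w) j a b) = 0"
    by (simp_all add: col_dev_def prob_space)
qed

lemma indep_var_word_entry_col_dev:
  assumes "\<And>t. t < k \<Longrightarrow> js t \<noteq> j"
  shows "indep_var borel (\<lambda>w. mat_prod p (\<lambda>t. col_dev (sample w) (js t)) k a m) borel (\<lambda>w. col_dev (sample w) j m b)"
proof (rule indep_var_column_split[where j = j])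
  show "(\<lambda>y. mat_prod p (\<lambda>t. col_dev y (js t)) k a m) \<in> borel_measurable (PiM UNIV (\<lambda>_. borel))"
    by (rule measurable_mat_prod_col_dev) simp
  show "(\<lambda>y. col_dev y j m b) \<in> borel_measurable (PiM UNIV (\<lambda>_. borel))"
    unfolding col_dev_def by measurable
  show "mat_prod p (\<lambda>t. col_dev y (js t)) k a m = mat_prod p (\<lambda>t. col_dev y' (js t)) k a m"
    if "\<And>i j'. j' \<noteq> j \<Longrightarrow> y (i, j') = y' (i, j')" for y y'
  proof -
    have "mat_prod p (\<lambda>t. col_dev y (js t)) k = mat_prod p (\<lambda>t. col_dev y' (js t)) k"
      using that assms by (intro mat_prod_cong) (simp add: col_dev_def fun_eq_iff)
    then show ?thesis
      by simp
  qed
  show "col_dev y j m b = col_dev y' j m b" if "\<And>i. y (i, j) = y' (i, j)" for y y'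
    using that by (simp add: col_dev_def)
qed

text \<open>The last factor is independent of the others and has mean zero.\<close>

lemma expectation_word_entry_last_unique:
  assumes "k < l" "\<And>t. t < k \<Longrightarrow> js t \<noteq> js k" "a < p"
  shows "expectation (\<lambda>w. mat_prod p (\<lambda>t. col_dev (sample w) (js t)) (Suc k) a b) = 0"
proof -
  let ?P = "\<lambda>w m. mat_prod p (\<lambda>t. col_dev (sample w) (js t)) k a m"
  let ?Z = "\<lambda>w m. col_dev (sample w) (js k) m b"
  have summand: "integrable M (\<lambda>w. ?P w m * ?Z w m) \<and> expectation (\<lambda>w. ?P w m * ?Z w m) = 0"
    if "m < p" for m
  proof -
    have indep_PZ: "indep_var borel (\<lambda>w. ?P w m) borel (\<lambda>w. ?Z w m)"
      using assms(2) by (rule indep_var_word_entry_col_dev)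
    have "integrable M (\<lambda>w. ?P w m)"
      using assms that by (intro integrable_word_entry) auto
    then show ?thesis
      using indep_var_integrable[OF indep_PZ _ integrable_col_dev]
        indep_var_lebesgue_integral[OF indep_PZ _ integrable_col_dev] expectation_col_dev
      by simp
  qed
  have "expectation (\<lambda>w. mat_prod p (\<lambda>t. col_dev (sample w) (js t)) (Suc k) a b) =
      (\<Sum>m<p. expectation (\<lambda>w. ?P w m * ?Z w m))"
    unfolding mat_prod.simps mat_mult_def using summand by (intro Bochner_Integration.integral_sum) auto
  also have "\<dots> = 0"
    using summand by simp
  finally show ?thesis .
qed

text \<open>Rotating the word cyclically moves an index that occurs only once to the end.\<close>

lemma expectation_word_trace_unique:
  assumes "t0 < k" "k \<le> l" "\<And>t. t < k \<Longrightarrow> t \<noteq> t0 \<Longrightarrow> js t \<noteq> js t0"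
  shows "expectation (\<lambda>w. word_trace p (sample w) js k) = 0"
proof -
  obtain k' where k': "k = Suc k'"
    using assms(1) by (cases k) auto
  define js' where "js' s = js ((s + Suc t0) mod k)" for s
  have last: "js' k' = js t0"
    using assms(1) by (simp add: js'_def k' mod_if)
  have unique: "js' t \<noteq> js' k'" if "t < k'" for t
  proof -
    have "(t + Suc t0) mod k \<noteq> t0"
      using that assms(1) by (auto simp: k' mod_if)
    then have "js' t \<noteq> js t0"
      unfolding js'_def using assms(3)[of "(t + Suc t0) mod k"] k' by simp
    then show ?thesis
      by (simp add: last)
  qed
  have "word_trace p y js k = word_trace p y js' (Suc k')" for y
    unfolding word_trace_def js'_def k'[symmetric] using assms(1)
    by (subst mat_trace_mat_prod_rotate[where r = "Suc t0"]) simp_all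
  then have "expectation (\<lambda>w. word_trace p (sample w) js k) =
      expectation (\<lambda>w. word_trace p (sample w) js' (Suc k'))"
    by simp
  also have "\<dots> = (\<Sum>a<p. expectation (\<lambda>w. mat_prod p (\<lambda>t. col_dev (sample w) (js' t)) (Suc k') a a))"
    unfolding word_trace_def mat_trace_def using assms(2) k'
    by (intro Bochner_Integration.integral_sum integrable_word_entry) simp_all
  also have "\<dots> = 0"
    using assms(2) k' unique by (simp add: expectation_word_entry_last_unique del: mat_prod.simps)
  finally show ?thesis .
qed

lemma
  assumes "2 \<le> l"
  shows integrable_entry_fourth: "integrable M (\<lambda>w. (Y i j w) ^ 4)"
    and expectation_entry_fourth: "expectation (\<lambda>w. (Y i j w) ^ 4) = expectation (\<lambda>w. (Y 0 0 w) ^ 4)"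
proof -
  show "integrable M (\<lambda>w. (Y i j w) ^ 4)"
  proof (rule Bochner_Integration.integrable_bound)
    show "integrable M (\<lambda>w. (1 + \<bar>Y i j w\<bar>) ^ 4)"
      using assms by (intro integrable_one_plus_abs_power) simp
    show "AE w in M. norm ((Y i j w) ^ 4) \<le> norm ((1 + \<bar>Y i j w\<bar>) ^ 4)"
    proof (rule AE_I2)
      fix w
      have "\<bar>Y i j w\<bar> ^ 4 \<le> (1 + \<bar>Y i j w\<bar>) ^ 4"
        by (intro power_mono) auto
      then show "norm ((Y i j w) ^ 4) \<le> norm ((1 + \<bar>Y i j w\<bar>) ^ 4)"
        by (simp add: power_abs)
    qed
  qed (use rv in measurable)
  show "expectation (\<lambda>w. (Y i j w) ^ 4) = expectation (\<lambda>w. (Y 0 0 w) ^ 4)"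
    by (rule expectation_comp_entry) simp
qed

lemma
  assumes "2 \<le> l"
  shows integrable_col_dev_sq: "integrable M (\<lambda>w. (col_dev (sample w) j a b)\<^sup>2)"
    and expectation_col_dev_sq: "expectation (\<lambda>w. (col_dev (sample w) j a b)\<^sup>2) =
      (if a = b then expectation (\<lambda>w. (Y 0 0 w) ^ 4) - 1 else 1)"
proof -
  have "integrable M (\<lambda>w. (col_dev (sample w) j a b)\<^sup>2) \<and>
      expectation (\<lambda>w. (col_dev (sample w) j a b)\<^sup>2) = (if a = b then expectation (\<lambda>w. (Y 0 0 w) ^ 4) - 1 else 1)"
  proof (cases "a = b")
    case True
    have "(\<lambda>w. (col_dev (sample w) j a b)\<^sup>2) = (\<lambda>w. (Y a j w) ^ 4 - 2 * (Y a j w)\<^sup>2 + 1)"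
      using True by (auto simp: col_dev_def power2_eq_square power4_eq_xxxx algebra_simps)
    then show ?thesis
      using True integrable_entry_fourth[OF assms] expectation_entry_fourth[OF assms]
        integrable_entry_sq expectation_entry_sq
      by (simp add: prob_space)
  next
    case False
    let ?X = "\<lambda>x w. ((\<lambda>(i, j). Y i j) x w)\<^sup>2"
    have ind: "indep_vars (\<lambda>_. borel) ?X {(a, j), (b, j)}"
      by (rule indep_vars_subset[OF indep_vars_compose2[OF indep, where Y = "\<lambda>_ x. x\<^sup>2"]]) auto
    have int: "\<And>x. x \<in> {(a, j), (b, j)} \<Longrightarrow> integrable M (?X x)"
      using integrable_entry_sq by auto
    have "(\<lambda>w. (col_dev (sample w) j a b)\<^sup>2) = (\<lambda>w. \<Prod>x\<in>{(a, j), (b, j)}. ?X x w)"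
      using False by (auto simp: col_dev_def power_mult_distrib)
    then show ?thesis
      using indep_vars_lebesgue_integral[OF _ ind int] indep_vars_integrable[OF _ ind int] False
      by (simp add: expectation_entry_sq)
  qed
  then show "integrable M (\<lambda>w. (col_dev (sample w) j a b)\<^sup>2)"
    and "expectation (\<lambda>w. (col_dev (sample w) j a b)\<^sup>2) =
      (if a = b then expectation (\<lambda>w. (Y 0 0 w) ^ 4) - 1 else 1)"
    by simp_all
qed

lemma expectation_word_trace_two:
  assumes "2 \<le> l"
  shows "expectation (\<lambda>w. word_trace p (sample w) js 2) =
    (if js 0 = js 1 then real p * (expectation (\<lambda>w. (Y 0 0 w) ^ 4) + real p - 2) else 0)"
proof (cases "js 0 = js 1")
  case False
  then have "expectation (\<lambda>w. word_trace p (sample w) js 2) = 0"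
    using assms by (intro expectation_word_trace_unique[of 1]) (auto simp: numeral_2_eq_2 less_Suc_eq)
  then show ?thesis
    using False by simp
next
  case True
  have square: "word_trace p y js 2 = (\<Sum>a<p. \<Sum>m<p. (col_dev y (js 0) a m)\<^sup>2)" for y
  proof -
    have "word_trace p y js 2 = (\<Sum>a<p. \<Sum>m<p. mat_prod p (\<lambda>t. col_dev y (js t)) 1 a m * col_dev y (js 1) m a)"
      by (simp add: word_trace_def mat_trace_def mat_mult_def numeral_2_eq_2 del: mat_prod.simps(2))
         (simp add: mat_mult_def)
    also have "\<dots> = (\<Sum>a<p. \<Sum>m<p. (col_dev y (js 0) a m)\<^sup>2)"
    proof (intro sum.cong refl)
      fix a m assume "a \<in> {..<p}"
      then have "mat_prod p (\<lambda>t. col_dev y (js t)) 1 a m = col_dev y (js 0) a m"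
        by (intro mat_prod_one) simp
      then show "mat_prod p (\<lambda>t. col_dev y (js t)) 1 a m * col_dev y (js 1) m a = (col_dev y (js 0) a m)\<^sup>2"
        using True by (simp only:) (simp add: col_dev_def power2_eq_square mult.commute)
    qed
    finally show ?thesis .
  qed
  have "expectation (\<lambda>w. word_trace p (sample w) js 2) =
      (\<Sum>a<p. \<Sum>m<p. expectation (\<lambda>w. (col_dev (sample w) (js 0) a m)\<^sup>2))"
    unfolding square using integrable_col_dev_sq[OF assms]
    by (simp add: Bochner_Integration.integral_sum Bochner_Integration.integrable_sum)
  also have "\<dots> = (\<Sum>a<p. \<Sum>m<p. 1 + (if m = a then expectation (\<lambda>w. (Y 0 0 w) ^ 4) - 2 else 0))"
    using assms by (intro sum.cong refl) (simp add: expectation_col_dev_sq)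
  also have "\<dots> = real p * (expectation (\<lambda>w. (Y 0 0 w) ^ 4) + real p - 2)"
    by (simp add: sum.distrib algebra_simps)
  finally show ?thesis
    using True by simp
qed

definition expected_word_sum :: "nat \<Rightarrow> nat \<Rightarrow> nat \<Rightarrow> real" where
  "expected_word_sum p k n =
     (\<Sum>js\<in>PiE {..<k} (\<lambda>_. {..<n}). expectation (\<lambda>w. word_trace p (sample w) js k))"

lemma expected_word_sum_0: "expected_word_sum p 0 n = real p"
  by (simp add: expected_word_sum_def word_trace_def mat_trace_def prob_space)

lemma expected_word_sum_1: "1 \<le> l \<Longrightarrow> expected_word_sum p 1 n = 0"
  unfolding expected_word_sum_def by (intro sum.neutral ballI expectation_word_trace_unique[of 0]) auto

lemma expected_word_sum_2:
  assumes "2 \<le> l"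
  shows "expected_word_sum p 2 n = real n * (real p * (expectation (\<lambda>w. (Y 0 0 w) ^ 4) + real p - 2))"
proof -
  define c where "c = real p * (expectation (\<lambda>w. (Y 0 0 w) ^ 4) + real p - 2)"
  have "expected_word_sum p 2 n = (\<Sum>js\<in>PiE {..<Suc (Suc 0)} (\<lambda>_. {..<n}). if js 0 = js 1 then c else 0)"
    unfolding expected_word_sum_def c_def using expectation_word_trace_two[OF assms]
    by (simp add: numeral_2_eq_2)
  also have "\<dots> = (\<Sum>j'<n. \<Sum>j<n. if j' = j then c else 0)"
    by (simp add: sum_PiE_lessThan_Suc)
  finally show ?thesis
    by (simp add: c_def)
qed

text \<open>Words of length \<open>k \<ge> 3\<close> with nonzero expectation have no singleton index, and
  there are only \<open>O(n\<^bsup>k - 2\<^esup>)\<close> of them.\<close>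

lemma abs_expected_word_sum_le:
  assumes "3 \<le> k" "k \<le> l"
  shows "\<bar>expected_word_sum p k n\<bar> \<le> real (k ^ 4 * n ^ (k - 2)) * (real p * word_bound p k)"
proof -
  let ?T = "tuples_without_singleton k n"
  have "expected_word_sum p k n = (\<Sum>js\<in>?T. expectation (\<lambda>w. word_trace p (sample w) js k))"
    unfolding expected_word_sum_def
  proof (rule sum.mono_neutral_right)
    show "\<forall>js\<in>PiE {..<k} (\<lambda>_. {..<n}) - ?T. expectation (\<lambda>w. word_trace p (sample w) js k) = 0"
      using assms(2) by (auto simp: tuples_without_singleton_def intro: expectation_word_trace_unique)
  qed (auto simp: tuples_without_singleton_def intro: finite_PiE)
  also have "\<bar>\<dots>\<bar> \<le> (\<Sum>js\<in>?T. real p * word_bound p k)"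
    by (rule order_trans[OF sum_abs]) (intro sum_mono abs_expectation_word_trace_le assms)
  also have "\<dots> = real (card ?T) * (real p * word_bound p k)"
    by simp
  also have "\<dots> \<le> real (k ^ 4 * n ^ (k - 2)) * (real p * word_bound p k)"
    using card_tuples_without_singleton_le[OF assms(1), of n] word_bound_nonneg[of p k]
    by (intro mult_right_mono) (simp_all only: of_nat_le_iff of_nat_0_le_iff mult_nonneg_nonneg)
  finally show ?thesis .
qed

lemma sample_cov_eq:
  assumes "1 \<le> n"
  shows "sample_cov Y n w =
    (\<lambda>a b. (if a = b then 1 else 0) + 1 / real n * (\<Sum>j<n. col_dev (sample w) j a b))"
proof (intro ext)
  fix a b
  have "(\<Sum>j<n. Y a j w * Y b j w) = (\<Sum>j<n. col_dev (sample w) j a b) + real n * (if a = b then 1 else 0)"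
    by (simp add: col_dev_def sum.distrib sum_subtractf)
  then show "sample_cov Y n w a b = (if a = b then 1 else 0) + 1 / real n * (\<Sum>j<n. col_dev (sample w) j a b)"
    using assms by (simp add: sample_cov_def field_simps)
qed

lemma trace_sample_cov_power:
  assumes "1 \<le> n"
  shows "mat_trace p (mat_pow p (sample_cov Y n w) l) =
    (\<Sum>k\<le>l. real (l choose k) * ((1 / real n) ^ k * (\<Sum>js\<in>PiE {..<k} (\<lambda>_. {..<n}). word_trace p (sample w) js k)))"
proof -
  define D where "D = (\<lambda>a b. 1 / real n * (\<Sum>j<n. col_dev (sample w) j a b))"
  have "mat_trace p (mat_pow p (sample_cov Y n w) l) =
      mat_trace p (\<lambda>a b. \<Sum>k\<le>l. real (l choose k) * mat_pow p D k a b)"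
  proof -
    have "sample_cov Y n w = (\<lambda>a b. (if a = b then 1 else 0) + D a b)"
      by (simp add: sample_cov_eq[OF assms] D_def)
    then show ?thesis
      by (simp add: mat_trace_cong[OF mat_pow_one_plus])
  qed
  also have "\<dots> = (\<Sum>k\<le>l. real (l choose k) * mat_trace p (mat_pow p D k))"
    by (simp add: mat_trace_sum mat_trace_def sum_distrib_left)
  also have "\<dots> = (\<Sum>k\<le>l. real (l choose k) * ((1 / real n) ^ k *
      (\<Sum>js\<in>PiE {..<k} (\<lambda>_. {..<n}). word_trace p (sample w) js k)))"
    unfolding D_def mat_pow_scaled_sum word_trace_def mat_trace_def
    by (simp add: sum_distrib_left) (simp only: sum.swap[of _ "{..<p}"])
  finally show ?thesis .
qed

lemma expectation_trace_sample_cov_power: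
  assumes "1 \<le> n"
  shows "expectation (\<lambda>w. mat_trace p (mat_pow p (sample_cov Y n w) l)) =
    (\<Sum>k\<le>l. real (l choose k) * ((1 / real n) ^ k * expected_word_sum p k n))"
  unfolding trace_sample_cov_power[OF assms] expected_word_sum_def
  by (simp add: integrable_word_trace Bochner_Integration.integral_sum Bochner_Integration.integrable_sum
      Bochner_Integration.integrable_mult_right)

lemma expectation_trace_sample_cov_power_bigo:
  "(\<lambda>n. expectation (\<lambda>w. mat_trace p (mat_pow p (sample_cov Y n w) l)) -
      (real p + real (l choose 2) * (real p * (expectation (\<lambda>w. (Y 0 0 w) ^ 4) + real p - 2)) / real n))
    \<in> O(\<lambda>n. 1 / (real n)\<^sup>2)"
proof -
  define c where "c = real p * (expectation (\<lambda>w. (Y 0 0 w) ^ 4) + real p - 2)"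
  have "(\<lambda>n. (\<Sum>k\<le>l. real (l choose k) * ((1 / real n) ^ k * expected_word_sum p k n)) -
      (real p + real (l choose 2) * c / real n)) \<in> O(\<lambda>n. 1 / (real n)\<^sup>2)"
  proof (rule binomial_expansion_bigo)
    show "expected_word_sum p 0 n = real p" for n
      by (rule expected_word_sum_0)
    show "expected_word_sum p 1 n = 0" if "1 \<le> l" for n
      using that by (rule expected_word_sum_1)
    show "expected_word_sum p 2 n = real n * c" if "2 \<le> l" for n
      using that unfolding c_def by (rule expected_word_sum_2)
    show "\<bar>expected_word_sum p k n\<bar> \<le> real (k ^ 4) * (real p * word_bound p k) * real n ^ (k - 2)"
      if "3 \<le> k" "k \<le> l" for k n
      using abs_expected_word_sum_le[OF that] by (simp add: mult_ac)
  qed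
  moreover have "\<forall>\<^sub>F n in at_top.
      expectation (\<lambda>w. mat_trace p (mat_pow p (sample_cov Y n w) l)) - (real p + real (l choose 2) * c / real n) =
      (\<Sum>k\<le>l. real (l choose k) * ((1 / real n) ^ k * expected_word_sum p k n)) - (real p + real (l choose 2) * c / real n)"
    using eventually_ge_at_top[of "1::nat"] by (rule eventually_mono) (simp only: expectation_trace_sample_cov_power)
  ultimately show ?thesis
    unfolding c_def[symmetric] by (rule landau_o.big.in_cong[THEN iffD2, rotated])
qed

end

theorem corollary6p4:
  fixes M :: "'a measure" and Y :: "nat \<Rightarrow> nat \<Rightarrow> 'a \<Rightarrow> real"
    and p l :: nat and \<alpha> :: real
  assumes "prob_space M"
    and rv: "\<And>i j. Y i j \<in> borel_measurable M"
    and indep: "prob_space.indep_vars M (\<lambda>_. borel) (\<lambda>(i, j). Y i j) UNIV"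
    and ident: "\<And>i j. distr M borel (Y i j) = distr M borel (Y 0 0)"
    and mean: "prob_space.expectation M (Y 0 0) = 0"
    and var: "prob_space.expectation M (\<lambda>w. (Y 0 0 w)^2) = 1"
    and sq_int: "integrable M (\<lambda>w. (Y 0 0 w)^2)"
    and mom: "integrable M (\<lambda>w. (Y 0 0 w)^(2*l))"
    and alpha: "\<alpha> = prob_space.expectation M (\<lambda>w. (Y 0 0 w)^4)"
  shows "(\<lambda>n. prob_space.expectation M (\<lambda>w. mat_trace p (mat_pow p (sample_cov Y n w) l))
            - (real p + real p * real l / (2 * real n)
                 * (\<alpha> * (real l - 1) + real l * real p - 2 * real l - real p + 2)))
         \<in> O(\<lambda>n. 1 / (real n)^2)"
proof -
  interpret iid_array M Y l
    by (rule iid_array.intro[OF assms(1)], unfold_locales) (use assms in auto)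
  have closed_form: "real (l choose 2) * (real p * (\<alpha> + real p - 2)) / real n =
      real p * real l / (2 * real n) * (\<alpha> * (real l - 1) + real l * real p - 2 * real l - real p + 2)" for n
    unfolding real_choose_two by (simp add: field_simps)
  show ?thesis
    using expectation_trace_sample_cov_power_bigo[of p] by (simp only: alpha[symmetric] closed_form)
qed

end
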